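(* Let $\mathcal{A}$, $\mathcal{B}$ be C$^\ast$-algebras and $\phi\colon\mathcal{A}\to\mathcal{B}$ a $\delta$-self-adjoint bounded linear map. Then there exists a self-adjoint bounded linear map $\psi\colon\mathcal{A}\to\mathcal{B}$ (i.e. $\psi(x^\ast)=\psi(x)^\ast$) with $\|\phi-\psi\|\le\frac12\delta$. Moreover, if $\phi$ is $\varepsilon$-order zero, then $\psi$ can be chosen to be $(\varepsilon+\frac12\delta\|\phi\|)$-order zero.
   Context: $\phi$ is $\delta$-self-adjoint if $\|\phi(x^\ast)-\phi(x)^\ast\|\le\delta\|x\|$ for all $x$. $x\perp y$ means $xy=yx=x^\ast y=xy^\ast=0$; $\phi$ is $\varepsilon$-order zero if $\|\phi(x)\phi(y)\|\le\varepsilon\|x\|\|y\|$ for all positive $x,y$ with $x\perp y$. *)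

theory Defs
  imports "HOL-Analysis.Analysis"
begin

text \<open>Complex scalar
  multiplication is a new class parameter compatible with the real one.\<close>

class cstar_algebra = real_normed_algebra + banach +
  fixes scaleC :: "complex \<Rightarrow> 'a \<Rightarrow> 'a"
    and cstar :: "'a \<Rightarrow> 'a"
  assumes scaleC_add_right: "scaleC a (x + y) = scaleC a x + scaleC a y"
    and scaleC_add_left: "scaleC (a + b) x = scaleC a x + scaleC b x"
    and scaleC_scaleC: "scaleC a (scaleC b x) = scaleC (a * b) x"
    and scaleC_one: "scaleC 1 x = x"
    and scaleR_scaleC: "scaleR r x = scaleC (complex_of_real r) x"
    and norm_scaleC: "norm (scaleC a x) = cmod a * norm x"
    and scaleC_mult_left: "scaleC a x * y = scaleC a (x * y)"
    and scaleC_mult_right: "x * scaleC a y = scaleC a (x * y)"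
    and cstar_cstar: "cstar (cstar x) = x"
    and cstar_add: "cstar (x + y) = cstar x + cstar y"
    and cstar_scaleC: "cstar (scaleC a x) = scaleC (cnj a) (cstar x)"
    and cstar_mult: "cstar (x * y) = cstar y * cstar x"
    and cstar_identity: "norm (cstar x * x) = (norm x)\<^sup>2"

definition clinear :: "('a::cstar_algebra \<Rightarrow> 'b::cstar_algebra) \<Rightarrow> bool" where
  "clinear f \<longleftrightarrow> (\<forall>x y. f (x + y) = f x + f y) \<and> (\<forall>c x. f (scaleC c x) = scaleC c (f x))"

definition bounded_clinear_map :: "('a::cstar_algebra \<Rightarrow> 'b::cstar_algebra) \<Rightarrow> bool" where
  "bounded_clinear_map f \<longleftrightarrow> clinear f \<and> (\<exists>K. \<forall>x. norm (f x) \<le> K * norm x)"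

definition cpositive :: "'a::cstar_algebra \<Rightarrow> bool" where
  "cpositive x \<longleftrightarrow> (\<exists>y. x = cstar y * y)"

definition orth :: "'a::cstar_algebra \<Rightarrow> 'a \<Rightarrow> bool" where
  "orth x y \<longleftrightarrow> x * y = 0 \<and> y * x = 0 \<and> cstar x * y = 0 \<and> x * cstar y = 0"

definition delta_self_adjoint :: "real \<Rightarrow> ('a::cstar_algebra \<Rightarrow> 'b::cstar_algebra) \<Rightarrow> bool" where
  "delta_self_adjoint \<delta> \<phi> \<longleftrightarrow> (\<forall>x. norm (\<phi> (cstar x) - cstar (\<phi> x)) \<le> \<delta> * norm x)"

definition self_adjoint_map :: "('a::cstar_algebra \<Rightarrow> 'b::cstar_algebra) \<Rightarrow> bool" where
  "self_adjoint_map \<psi> \<longleftrightarrow> (\<forall>x. \<psi> (cstar x) = cstar (\<psi> x))"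

definition eps_order_zero :: "real \<Rightarrow> ('a::cstar_algebra \<Rightarrow> 'b::cstar_algebra) \<Rightarrow> bool" where
  "eps_order_zero \<epsilon> \<phi> \<longleftrightarrow> (\<forall>x y. cpositive x \<longrightarrow> cpositive y \<longrightarrow> orth x y \<longrightarrow>
      norm (\<phi> x * \<phi> y) \<le> \<epsilon> * norm x * norm y)"

end

theory Submission
  imports Defs
begin

text \<open>The map \<open>\<psi> x = (\<phi> x + \<phi>(x\<^sup>*)\<^sup>*) / 2\<close> is self-adjoint, and
  \<open>\<phi> x - \<psi> x = (\<phi> x\<^sup>* - \<phi>(x\<^sup>*))\<^sup>* / 2\<close>, which has norm at most \<open>\<delta>\<parallel>x\<parallel>/2\<close>.
  For orthogonal positive \<open>x, y\<close> put \<open>a = \<phi> x\<close>, \<open>b = \<phi> y\<close>; expanding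
  \<open>(a + a\<^sup>*)(b + b\<^sup>*) = 3ab + a(b\<^sup>* - b) + (a\<^sup>* - a)b + (ba)\<^sup>*\<close> and using
  \<open>\<parallel>a\<^sup>* - a\<parallel> \<le> \<delta>\<parallel>x\<parallel>\<close> (as \<open>x\<^sup>* = x\<close>) bounds \<open>\<parallel>\<psi> x \<psi> y\<parallel>\<close> by
  \<open>(4\<epsilon> + 2\<delta>\<parallel>\<phi>\<parallel>)\<parallel>x\<parallel>\<parallel>y\<parallel>/4\<close>.\<close>

lemma cstar_zero [simp]: "cstar (0::'a::cstar_algebra) = 0"
  by (metis add_cancel_right_right cstar_add)

lemma cstar_minus: "cstar (- (x::'a::cstar_algebra)) = - cstar x"
  by (metis add_eq_0_iff cstar_add cstar_zero neg_eq_iff_add_eq_0)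

lemma cstar_diff: "cstar ((x::'a::cstar_algebra) - y) = cstar x - cstar y"
  by (simp only: diff_conv_add_uminus cstar_add cstar_minus)

lemma cstar_scaleR: "cstar (scaleR r (x::'a::cstar_algebra)) = scaleR r (cstar x)"
  by (simp add: scaleR_scaleC cstar_scaleC)

lemma norm_cstar_le: "norm (cstar (x::'a::cstar_algebra)) \<le> norm x"
proof (cases "cstar x = 0")
  case True
  then show ?thesis by simp
next
  case False
  have "norm (cstar x) * norm (cstar x) = norm (cstar (cstar x) * cstar x)"
    by (simp add: cstar_identity power2_eq_square)
  also have "\<dots> \<le> norm x * norm (cstar x)"
    by (simp add: cstar_cstar norm_mult_ineq)
  finally show ?thesis using False by simp
qed

lemma norm_cstar [simp]: "norm (cstar (x::'a::cstar_algebra)) = norm x"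
  by (metis antisym norm_cstar_le cstar_cstar)

lemma cstar_cpositive: "cpositive (x::'a::cstar_algebra) \<Longrightarrow> cstar x = x"
  unfolding cpositive_def by (auto simp: cstar_mult cstar_cstar)

lemma orth_commute: "orth (x::'a::cstar_algebra) y \<Longrightarrow> orth y x"
  unfolding orth_def by (metis cstar_mult cstar_cstar cstar_zero)

lemma bounded_clinear_map_imp_bounded_linear:
  assumes "bounded_clinear_map (f::'a::cstar_algebra \<Rightarrow> 'b::cstar_algebra)"
  shows "bounded_linear f"
proof
  from assms have f: "clinear f" and "\<exists>K. \<forall>x. norm (f x) \<le> K * norm x"
    unfolding bounded_clinear_map_def by blast+
  then show "\<exists>K. \<forall>x. norm (f x) \<le> norm x * K"
    by (metis mult.commute)
  show "f (x + y) = f x + f y" for x y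
    using f unfolding clinear_def by blast
  show "f (scaleR r x) = scaleR r (f x)" for r x
    using f unfolding clinear_def by (simp add: scaleR_scaleC)
qed

lemma norm_mult_real_part_le:
  fixes a b :: "'a::cstar_algebra"
  shows "norm (scaleR (1/2) (a + cstar a) * scaleR (1/2) (b + cstar b))
    \<le> (3 * norm (a * b) + norm a * norm (cstar b - b) + norm (cstar a - a) * norm b
        + norm (b * a)) / 4"
proof -
  have "(a + cstar a) * (b + cstar b)
      = a * b + a * b + a * b + a * (cstar b - b) + (cstar a - a) * b + cstar (b * a)"
    by (simp add: cstar_mult algebra_simps)
  then have "norm ((a + cstar a) * (b + cstar b))
      \<le> 3 * norm (a * b) + norm (a * (cstar b - b)) + norm ((cstar a - a) * b) + norm (b * a)"
    by (smt (verit) norm_cstar norm_triangle_ineq)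
  also have "\<dots> \<le> 3 * norm (a * b) + norm a * norm (cstar b - b)
      + norm (cstar a - a) * norm b + norm (b * a)"
    using norm_mult_ineq[of a "cstar b - b"] norm_mult_ineq[of "cstar a - a" b] by simp
  finally show ?thesis
    by simp
qed

definition self_adjoint_part ::
    "('a::cstar_algebra \<Rightarrow> 'b::cstar_algebra) \<Rightarrow> 'a \<Rightarrow> 'b" where
  "self_adjoint_part \<phi> x = scaleR (1/2) (\<phi> x + cstar (\<phi> (cstar x)))"

lemma self_adjoint_map_self_adjoint_part: "self_adjoint_map (self_adjoint_part \<phi>)"
  unfolding self_adjoint_map_def self_adjoint_part_def
  by (simp add: cstar_scaleR cstar_add cstar_cstar add.commute)

lemma bounded_clinear_map_self_adjoint_part:
  assumes "bounded_clinear_map \<phi>"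
  shows "bounded_clinear_map (self_adjoint_part \<phi>)"
proof -
  from assms obtain K where K: "\<And>x. norm (\<phi> x) \<le> K * norm x"
    and add: "\<And>x y. \<phi> (x + y) = \<phi> x + \<phi> y"
    and scale: "\<And>c x. \<phi> (scaleC c x) = scaleC c (\<phi> x)"
    unfolding bounded_clinear_map_def clinear_def by blast
  have "norm (self_adjoint_part \<phi> x) \<le> K * norm x" for x
  proof -
    have "norm (self_adjoint_part \<phi> x) \<le> (norm (\<phi> x) + norm (\<phi> (cstar x))) / 2"
      unfolding self_adjoint_part_def
      using norm_triangle_ineq[of "\<phi> x" "cstar (\<phi> (cstar x))"] by simp
    also have "\<dots> \<le> K * norm x"
      using K[of x] K[of "cstar x"] by simp
    finally show ?thesis .
  qed
  moreover have "clinear (self_adjoint_part \<phi>)"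
    unfolding clinear_def self_adjoint_part_def
    by (simp add: add scale cstar_add cstar_scaleC cstar_cstar scaleR_scaleC scaleC_scaleC
        scaleC_add_right mult.commute algebra_simps)
  ultimately show ?thesis
    unfolding bounded_clinear_map_def by blast
qed

lemma norm_diff_self_adjoint_part:
  "norm (\<phi> x - self_adjoint_part \<phi> x) = norm (\<phi> (cstar x) - cstar (\<phi> x)) / 2"
proof -
  have "\<phi> x - self_adjoint_part \<phi> x = scaleR (1/2) (cstar (cstar (\<phi> x) - \<phi> (cstar x)))"
    unfolding self_adjoint_part_def cstar_diff cstar_cstar
    by (simp add: algebra_simps flip: scaleR_add_left)
  then show ?thesis
    by (simp add: norm_minus_commute)
qed

lemma onorm_diff_self_adjoint_part_le:
  assumes "0 \<le> \<delta>" and "delta_self_adjoint \<delta> \<phi>"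
  shows "onorm (\<lambda>x. \<phi> x - self_adjoint_part \<phi> x) \<le> \<delta> / 2"
proof (rule onorm_bound)
  show "0 \<le> \<delta> / 2" using assms(1) by simp
  show "norm (\<phi> x - self_adjoint_part \<phi> x) \<le> \<delta> / 2 * norm x" for x
  proof -
    have "norm (\<phi> (cstar x) - cstar (\<phi> x)) \<le> \<delta> * norm x"
      using assms(2) unfolding delta_self_adjoint_def by blast
    then show ?thesis
      unfolding norm_diff_self_adjoint_part by simp
  qed
qed

lemma eps_order_zero_self_adjoint_part:
  fixes \<phi> :: "'a::cstar_algebra \<Rightarrow> 'b::cstar_algebra"
  assumes "0 \<le> \<delta>" and "bounded_linear \<phi>" and "delta_self_adjoint \<delta> \<phi>"
    and "eps_order_zero \<epsilon> \<phi>"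
  shows "eps_order_zero (\<epsilon> + \<delta> / 2 * onorm \<phi>) (self_adjoint_part \<phi>)"
  unfolding eps_order_zero_def
proof (intro allI impI)
  fix x y :: 'a
  assume x: "cpositive x" and y: "cpositive y" and xy: "orth x y"
  define a b where "a = \<phi> x" and "b = \<phi> y"
  have "norm (a * b) \<le> \<epsilon> * norm x * norm y" "norm (b * a) \<le> \<epsilon> * norm x * norm y"
    using assms(4) x y xy orth_commute[OF xy] unfolding a_def b_def eps_order_zero_def
    by (auto simp: mult.commute mult.left_commute)
  moreover have "norm (cstar a - a) \<le> \<delta> * norm x" "norm (cstar b - b) \<le> \<delta> * norm y"
    using assms(3) cstar_cpositive[OF x] cstar_cpositive[OF y]
    unfolding a_def b_def delta_self_adjoint_def by (metis norm_minus_commute)+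
  moreover have "norm a \<le> onorm \<phi> * norm x" "norm b \<le> onorm \<phi> * norm y"
    using onorm[OF assms(2)] unfolding a_def b_def by auto
  ultimately have
    "norm a * norm (cstar b - b) \<le> onorm \<phi> * norm x * (\<delta> * norm y)"
    "norm (cstar a - a) * norm b \<le> \<delta> * norm x * (onorm \<phi> * norm y)"
    "norm (a * b) \<le> \<epsilon> * norm x * norm y" "norm (b * a) \<le> \<epsilon> * norm x * norm y"
    using mult_mono[of "norm a" _ "norm (cstar b - b)"] mult_mono[of "norm (cstar a - a)" _ "norm b"]
      assms(1) onorm_pos_le[OF assms(2)]
    by simp_all
  moreover have "self_adjoint_part \<phi> x * self_adjoint_part \<phi> y
      = scaleR (1/2) (a + cstar a) * scaleR (1/2) (b + cstar b)"
    unfolding self_adjoint_part_def a_def b_def cstar_cpositive[OF x] cstar_cpositive[OF y] ..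
  ultimately show "norm (self_adjoint_part \<phi> x * self_adjoint_part \<phi> y)
      \<le> (\<epsilon> + \<delta> / 2 * onorm \<phi>) * norm x * norm y"
    using norm_mult_real_part_le[of a b] by (simp add: field_simps)
qed

theorem lemma2p3:
  fixes \<phi> :: "'a::cstar_algebra \<Rightarrow> 'b::cstar_algebra" and \<delta> :: real
  assumes "0 \<le> \<delta>"
    and "bounded_clinear_map \<phi>"
    and "delta_self_adjoint \<delta> \<phi>"
  shows "(\<exists>\<psi>. bounded_clinear_map \<psi> \<and> self_adjoint_map \<psi> \<and>
            onorm (\<lambda>x. \<phi> x - \<psi> x) \<le> \<delta> / 2)
       \<and> (\<forall>\<epsilon>. eps_order_zero \<epsilon> \<phi> \<longrightarrow>
            (\<exists>\<psi>. bounded_clinear_map \<psi> \<and> self_adjoint_map \<psi> \<and>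
              onorm (\<lambda>x. \<phi> x - \<psi> x) \<le> \<delta> / 2 \<and>
              eps_order_zero (\<epsilon> + \<delta> / 2 * onorm \<phi>) \<psi>))"
  using bounded_clinear_map_self_adjoint_part[OF assms(2)]
    self_adjoint_map_self_adjoint_part
    onorm_diff_self_adjoint_part_le[OF assms(1,3)]
    eps_order_zero_self_adjoint_part[OF assms(1)
      bounded_clinear_map_imp_bounded_linear[OF assms(2)] assms(3)]
  by blast

end
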